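(* Let $\mathcal{A}=\{X_1,\dots,X_M\}\subseteq\mathbb{R}^d$ be a fixed action set spanning $\mathbb{R}^d$ with $\|X_i\|_2\le c$, let $\theta^*\in\mathbb{R}^d$ with $\|\theta^*\|_2\le c'$ and $X_i^\top\theta^*\in[0,1]$ for all $i$, and let $1\le k\le M$. Let $\mathbf{w}_k^*$ be a minimizer in the definition of $f^*(\mathcal{A},k)$. Consider the policy $\pi$ that, over $T$ rounds (selecting $k$ distinct arms per round, $kT$ selections in total), plays each arm $X_i$ exactly $kT\,w^*_{k,i}$ times in total (assume these are integers), and let $\hat\theta_T$ be the ridge estimator with parameter $\lambda>0$. Then $$\mathrm{RMSE}_T(\pi,\mathcal{A},\theta^* )\in\tilde{\mathcal{O}}\!\left(\sqrt{\frac{f^*(\mathcal{A},k)}{kT}}\right),$$ where $\tilde{\mathcal{O}}$ hides constant factors and logarithmic factors in $d$, $kT$, $\lambda$, $c$, $c'$.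
   Context: Setting: in each round $t=1,\dots,T$ the agent selects $k$ distinct actions $X_{t,1},\dots,X_{t,k}\in\mathcal{A}$ and observes independent binary rewards $r_{t,i}\in\{0,1\}$ with $\mathbb{E}[r_{t,i}]=X_{t,i}^\top\theta^*$. For $\lambda>0$ define $V_t=\lambda I+\sum_{s=1}^t\sum_{r=1}^k X_{s,r}X_{s,r}^\top$ and the ridge estimator $\hat\theta_T=V_T^{-1}\sum_{s=1}^T\sum_{r=1}^k r_{s,r}X_{s,r}$. The RMSE after $T$ rounds is $\mathrm{RMSE}_T(\pi,\mathcal{A},\theta^* )=\mathbb{E}\Big[\sqrt{\tfrac{1}{|\mathcal{A}|}\sum_{X\in\mathcal{A}}(X^\top(\hat\theta_T-\theta^* ))^2}\Big]$. Let $\Delta^{M-1}_{1/k}=\{\mathbf{w}\in\mathbb{R}^M: w_i\ge 0,\ \sum_i w_i=1,\ w_i\le 1/k\ \forall i\}$ and $$f^*(\mathcal{A},k)=\min_{\mathbf{w}\in\Delta^{M-1}_{1/k}}\ \max_{X_i\in\mathcal{A}} X_i^\top\Big(\sum_{j=1}^M w_jX_jX_j^\top\Big)^{-1}X_i .$$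
   Formalization: The constant hidden by $\tilde{\mathcal{O}}$ may depend arbitrarily on $\lambda$, $c$ and $c'$, not only logarithmically; only the factors in $d$ and $kT$ remain polylogarithmic, as a power of ln(d + kT + 2). Apart from conventions, each condition added here is assumed in the paper as well or is needed for the statement above to hold. *)

theory Defs
  imports "Jordan_Normal_Form.Matrix" "HOL-Probability.Product_PMF"
begin

text \<open>Inverse of a square matrix (meaningful when it is invertible).\<close>
definition minv :: "real mat \<Rightarrow> real mat" where
  "minv A = (THE B. B \<in> carrier_mat (dim_row A) (dim_row A) \<and>
                    A * B = 1\<^sub>m (dim_row A) \<and> B * A = 1\<^sub>m (dim_row A))"

definition spans_Rd :: "nat \<Rightarrow> (nat \<Rightarrow> real Matrix.vec) \<Rightarrow> nat \<Rightarrow> bool" where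
  "spans_Rd d X M \<longleftrightarrow>
     (\<forall>v \<in> carrier_vec d. \<exists>a :: nat \<Rightarrow> real.
        v = Matrix.vec d (\<lambda>j. \<Sum>i<M. a i * vec_index (X i) j))"

definition capped_simplex :: "nat \<Rightarrow> nat \<Rightarrow> (nat \<Rightarrow> real) set" where
  "capped_simplex M k = {w. (\<forall>i<M. 0 \<le> w i \<and> w i \<le> 1 / real k) \<and> (\<Sum>i<M. w i) = 1}"

definition design :: "nat \<Rightarrow> (nat \<Rightarrow> real Matrix.vec) \<Rightarrow> nat \<Rightarrow> (nat \<Rightarrow> real) \<Rightarrow> real mat" where
  "design d X M w = Matrix.mat d d (\<lambda>(a,b). \<Sum>j<M. w j * (vec_index (X j) a * vec_index (X j) b))"

definition gobj :: "nat \<Rightarrow> (nat \<Rightarrow> real Matrix.vec) \<Rightarrow> nat \<Rightarrow> (nat \<Rightarrow> real) \<Rightarrow> real" where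
  "gobj d X M w = Max ((\<lambda>i. scalar_prod (X i) ((minv (design d X M w) *\<^sub>v X i))) ` {..<M})"

definition is_fstar_minimizer :: "nat \<Rightarrow> (nat \<Rightarrow> real Matrix.vec) \<Rightarrow> nat \<Rightarrow> nat \<Rightarrow> (nat \<Rightarrow> real) \<Rightarrow> bool" where
  "is_fstar_minimizer d X M k w \<longleftrightarrow>
     w \<in> capped_simplex M k \<and> invertible_mat (design d X M w) \<and>
     (\<forall>v \<in> capped_simplex M k. invertible_mat (design d X M v) \<longrightarrow>
          gobj d X M w \<le> gobj d X M v)"

definition fstar :: "nat \<Rightarrow> (nat \<Rightarrow> real Matrix.vec) \<Rightarrow> nat \<Rightarrow> nat \<Rightarrow> real" where
  "fstar d X M k = Inf (gobj d X M ` {w \<in> capped_simplex M k. invertible_mat (design d X M w)})"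

text \<open>V_T = \<lambda> I + \<Sum>_t \<Sum>_r X_{t,r} X_{t,r}^T for the schedule sched (round t, slot r -> arm index).\<close>
definition Vmat :: "nat \<Rightarrow> real \<Rightarrow> (nat \<Rightarrow> real Matrix.vec) \<Rightarrow> (nat \<Rightarrow> nat \<Rightarrow> nat) \<Rightarrow> nat \<Rightarrow> nat \<Rightarrow> real mat" where
  "Vmat d lam X sched T k = lam \<cdot>\<^sub>m 1\<^sub>m d +
     Matrix.mat d d (\<lambda>(a,b). \<Sum>(t,r)\<in>{..<T}\<times>{..<k}. vec_index (X (sched t r)) a * vec_index (X (sched t r)) b)"

definition ridge :: "nat \<Rightarrow> real \<Rightarrow> (nat \<Rightarrow> real Matrix.vec) \<Rightarrow> (nat \<Rightarrow> nat \<Rightarrow> nat) \<Rightarrow> nat \<Rightarrow> nat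
                     \<Rightarrow> (nat \<times> nat \<Rightarrow> bool) \<Rightarrow> real Matrix.vec" where
  "ridge d lam X sched T k rw = minv (Vmat d lam X sched T k) *\<^sub>v
     Matrix.vec d (\<lambda>a. \<Sum>(t,r)\<in>{..<T}\<times>{..<k}. of_bool (rw (t,r)) * vec_index (X (sched t r)) a)"

definition rewards :: "(nat \<Rightarrow> real Matrix.vec) \<Rightarrow> real Matrix.vec \<Rightarrow> (nat \<Rightarrow> nat \<Rightarrow> nat) \<Rightarrow> nat \<Rightarrow> nat
                       \<Rightarrow> (nat \<times> nat \<Rightarrow> bool) pmf" where
  "rewards X \<theta> sched T k =
     Pi_pmf ({..<T}\<times>{..<k}) False (\<lambda>(t,r). bernoulli_pmf (scalar_prod (X (sched t r)) (\<theta>)))"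

definition RMSE :: "nat \<Rightarrow> real \<Rightarrow> (nat \<Rightarrow> real Matrix.vec) \<Rightarrow> nat \<Rightarrow> real Matrix.vec \<Rightarrow> (nat \<Rightarrow> nat \<Rightarrow> nat)
                    \<Rightarrow> nat \<Rightarrow> nat \<Rightarrow> real" where
  "RMSE d lam X M \<theta> sched T k =
     measure_pmf.expectation (rewards X \<theta> sched T k)
       (\<lambda>rw. sqrt ((1 / real M) * (\<Sum>i<M. (scalar_prod (X i) ((ridge d lam X sched T k rw - \<theta>)))\<^sup>2)))"

end

(*
  Let V = lam I + sum of X X^T over all k T plays.  The ridge estimate satisfies
  x^T (theta_hat - theta) = sum_s (x^T V^-1 X_s) eps_s - lam x^T V^-1 theta, with independent
  centred Bernoulli noises eps_s of variance at most 1/4, so the mean square prediction error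
  at x is at most (1/4 + lam |theta|^2) x^T V^-1 x.  Playing arm i exactly k T w_i times makes
  V dominate k T W(w) in the Loewner order, hence x^T V^-1 x <= x^T W(w)^-1 x / (k T), which is
  at most f*(A,k) / (k T) for every arm when w is optimal.  Averaging over the arms and
  Jensen's inequality for the square root give RMSE <= sqrt ((1/4 + lam c'^2) f*(A,k) / (k T)).
*)

theory Submission
  imports Defs "Jordan_Normal_Form.Determinant"
begin

no_notation inner (infix \<open>\<bullet>\<close> 70) and vec_nth (infixl \<open>$\<close> 90)

section \<open>Matrix inverses and inner products\<close>

lemma minv_eqI:
  assumes A: "A \<in> carrier_mat n n" and B: "B \<in> carrier_mat n n"
    and AB: "A * B = 1\<^sub>m n" and BA: "B * A = 1\<^sub>m n"
  shows "minv A = B"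
  unfolding minv_def
proof (rule the_equality)
  show "B \<in> carrier_mat (dim_row A) (dim_row A) \<and> A * B = 1\<^sub>m (dim_row A)
      \<and> B * A = 1\<^sub>m (dim_row A)"
    using A B AB BA by auto
next
  fix B'
  assume B': "B' \<in> carrier_mat (dim_row A) (dim_row A) \<and> A * B' = 1\<^sub>m (dim_row A)
    \<and> B' * A = 1\<^sub>m (dim_row A)"
  then have "B' = B' * (A * B)" using A AB by auto
  also have "\<dots> = (B' * A) * B" using A B B' by (intro assoc_mult_mat[symmetric]) auto
  also have "\<dots> = B" using A B B' by auto
  finally show "B' = B" .
qed

lemma minv_mat:
  assumes A: "A \<in> carrier_mat n n" and "invertible_mat A"
  shows "minv A \<in> carrier_mat n n" "A * minv A = 1\<^sub>m n"
proof -
  obtain B where AB: "A * B = 1\<^sub>m n" and BA: "B * A = 1\<^sub>m (dim_row B)"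
    using assms unfolding invertible_mat_def inverts_mat_def by auto
  have B: "B \<in> carrier_mat n n"
    using A AB BA by (metis carrier_matD(2) carrier_matI index_mult_mat(3) index_one_mat(3))
  then have "minv A = B" using minv_eqI[OF A B AB] BA by auto
  then show "minv A \<in> carrier_mat n n" "A * minv A = 1\<^sub>m n" using AB B by auto
qed

lemma mult_minv_mat_vec:
  assumes A: "A \<in> carrier_mat n n" and "invertible_mat A" and x: "x \<in> carrier_vec n"
  shows "minv A *\<^sub>v x \<in> carrier_vec n" "A *\<^sub>v (minv A *\<^sub>v x) = x"
  using minv_mat[OF assms(1,2)] x by (auto simp flip: assoc_mult_mat_vec[OF A])

lemma invertible_mat_if_pos_def:
  fixes A :: "real mat"
  assumes A: "A \<in> carrier_mat n n"
    and pos: "\<And>v. v \<in> carrier_vec n \<Longrightarrow> v \<noteq> 0\<^sub>v n \<Longrightarrow> 0 < (A *\<^sub>v v) \<bullet> v"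
  shows "invertible_mat A"
proof -
  have "det A \<noteq> 0"
  proof
    assume "det A = 0"
    then obtain v where "v \<in> carrier_vec n" "v \<noteq> 0\<^sub>v n" "A *\<^sub>v v = 0\<^sub>v n"
      using det_0_iff_vec_prod_zero_field[OF A] by auto
    with pos show False by fastforce
  qed
  from det_non_zero_imp_unit[OF A this, of "()"] A show ?thesis
    unfolding Units_def invertible_mat_def inverts_mat_def by (auto simp: ring_mat_simps)
qed

lemma scalar_prod_self_nonneg: "0 \<le> (v :: real Matrix.vec) \<bullet> v"
  unfolding scalar_prod_def by (intro sum_nonneg) auto

lemma scalar_prod_self_pos:
  fixes v :: "real Matrix.vec"
  assumes "v \<in> carrier_vec n" and "v \<noteq> 0\<^sub>v n"
  shows "0 < v \<bullet> v"
proof -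
  obtain i where "i < n" "v $ i \<noteq> 0"
    using assms by (metis carrier_vecD eq_vecI index_zero_vec)
  then show ?thesis
    unfolding scalar_prod_def using assms by (intro sum_pos2[of _ i]) auto
qed

lemma scalar_prod_Cauchy_Schwarz:
  fixes u v :: "real Matrix.vec"
  assumes "u \<in> carrier_vec n" and "v \<in> carrier_vec n"
  shows "(u \<bullet> v)\<^sup>2 \<le> (u \<bullet> u) * (v \<bullet> v)"
  using Cauchy_Schwarz_ineq_sum[of "vec_index u" "vec_index v" "{0..<n}"] assms
  by (simp add: scalar_prod_def power2_eq_square)

lemma smult_one_mult_mat_vec:
  fixes y :: "real Matrix.vec"
  assumes "y \<in> carrier_vec d"
  shows "(c \<cdot>\<^sub>m 1\<^sub>m d) *\<^sub>v y = c \<cdot>\<^sub>v y"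
  using assms
  by (intro eq_vecI) (auto simp: scalar_prod_def row_def if_distrib if_distribR cong: if_cong)

section \<open>Weighted Gram matrices\<close>

definition gram_mat ::
  "nat \<Rightarrow> 'j set \<Rightarrow> ('j \<Rightarrow> real) \<Rightarrow> ('j \<Rightarrow> real Matrix.vec) \<Rightarrow> real mat" where
  "gram_mat d J c Y = Matrix.mat d d (\<lambda>(a, b). \<Sum>j\<in>J. c j * (Y j $ a * Y j $ b))"

lemma gram_mat_carrier [simp]: "gram_mat d J c Y \<in> carrier_mat d d"
  by (simp add: gram_mat_def)

lemma scalar_prod_vec_sum:
  assumes u: "u \<in> carrier_vec d" and Y: "Y ` J \<subseteq> carrier_vec d"
  shows "Matrix.vec d (\<lambda>a. \<Sum>j\<in>J. c j * Y j $ a) \<bullet> u = (\<Sum>j\<in>J. c j * (Y j \<bullet> u))"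
  using u Y by (simp add: scalar_prod_def sum_distrib_left sum_distrib_right mult_ac
      sum.swap[where B = J])

lemma mult_gram_mat_vec:
  assumes y: "y \<in> carrier_vec d" and Y: "Y ` J \<subseteq> carrier_vec d"
  shows "gram_mat d J c Y *\<^sub>v y = Matrix.vec d (\<lambda>a. \<Sum>j\<in>J. (c j * (Y j \<bullet> y)) * Y j $ a)"
  using y Y
  by (intro eq_vecI) (simp_all add: gram_mat_def scalar_prod_def row_def sum_distrib_left
      sum_distrib_right mult_ac sum.swap[where A = "{0..<d}"])

lemma scalar_prod_gram_mat:
  assumes y: "y \<in> carrier_vec d" and z: "z \<in> carrier_vec d"
    and Y: "Y ` J \<subseteq> carrier_vec d"
  shows "(gram_mat d J c Y *\<^sub>v y) \<bullet> z = (\<Sum>j\<in>J. c j * (Y j \<bullet> y) * (Y j \<bullet> z))"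
  unfolding mult_gram_mat_vec[OF y Y] by (simp add: scalar_prod_vec_sum[OF z Y])

lemma minv_quad_form_antimono:
  fixes V :: "real mat" and d :: nat and I :: "'i set" and w :: "'i \<Rightarrow> real" and Y
  defines "W \<equiv> gram_mat d I w Y"
  assumes V: "V \<in> carrier_mat d d" "invertible_mat V" and W: "invertible_mat W"
    and w: "\<And>i. i \<in> I \<Longrightarrow> 0 \<le> w i" and Y: "Y ` I \<subseteq> carrier_vec d"
    and m: "0 \<le> m"
    and loewner: "\<And>u. u \<in> carrier_vec d \<Longrightarrow> m * ((W *\<^sub>v u) \<bullet> u) \<le> (V *\<^sub>v u) \<bullet> u"
    and x: "x \<in> carrier_vec d"
  shows "m * (x \<bullet> (minv V *\<^sub>v x)) \<le> x \<bullet> (minv W *\<^sub>v x)"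
proof -
  define u where "u = minv V *\<^sub>v x"
  define y where "y = minv W *\<^sub>v x"
  have u: "u \<in> carrier_vec d" "V *\<^sub>v u = x"
    using mult_minv_mat_vec[OF V x] by (simp_all add: u_def)
  have y: "y \<in> carrier_vec d" "W *\<^sub>v y = x"
    using mult_minv_mat_vec[OF _ W x] by (simp_all add: y_def W_def)
  have xu: "x \<bullet> u = (\<Sum>i\<in>I. w i * (Y i \<bullet> y) * (Y i \<bullet> u))"
    using scalar_prod_gram_mat[OF y(1) u(1) Y, of w] y(2) by (simp add: W_def)
  have xy: "x \<bullet> y = (\<Sum>i\<in>I. w i * (Y i \<bullet> y)\<^sup>2)"
    using scalar_prod_gram_mat[OF y(1) y(1) Y, of w] y(2)
    by (simp add: W_def power2_eq_square mult.assoc)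
  have "m * (\<Sum>i\<in>I. w i * (Y i \<bullet> u)\<^sup>2) \<le> x \<bullet> u"
    using loewner[OF u(1)] scalar_prod_gram_mat[OF u(1) u(1) Y, of w] u(2)
    by (simp add: W_def power2_eq_square mult.assoc)
  then have "m * (m * (\<Sum>i\<in>I. w i * (Y i \<bullet> u)\<^sup>2)) \<le> m * (x \<bullet> u)"
    using m by (rule mult_left_mono)
  \<comment> \<open>Cauchy-Schwarz for the semi-inner product of \<open>W\<close>, with \<open>u = V\<inverse> x\<close> and \<open>y = W\<inverse> x\<close>\<close>
  moreover have "0 \<le> (\<Sum>i\<in>I. w i * (m * (Y i \<bullet> u) - Y i \<bullet> y)\<^sup>2)"
    using w by (intro sum_nonneg) auto
  moreover have "(\<Sum>i\<in>I. w i * (m * (Y i \<bullet> u) - Y i \<bullet> y)\<^sup>2)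
      = m * (m * (\<Sum>i\<in>I. w i * (Y i \<bullet> u)\<^sup>2)) - 2 * m * (x \<bullet> u) + x \<bullet> y"
    unfolding xu xy
    by (simp add: power2_diff sum.distrib sum_subtractf sum_distrib_left algebra_simps
        power2_eq_square)
  ultimately show ?thesis by (simp add: u_def y_def)
qed

section \<open>Independent coordinates of a product distribution\<close>

lemma finite_set_Pi_pmf:
  assumes "finite A" and "\<And>x. x \<in> A \<Longrightarrow> finite (set_pmf (p x))"
  shows "finite (set_pmf (Pi_pmf A dflt p))"
  using set_Pi_pmf_subset'[OF assms(1)] by (rule finite_subset) (use assms in auto)

lemma expectation_Pi_pmf_component:
  fixes h :: "'b \<Rightarrow> real"
  assumes "finite A" and "x \<in> A"
  shows "measure_pmf.expectation (Pi_pmf A dflt p) (\<lambda>y. h (y x)) = measure_pmf.expectation (p x) h"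
proof -
  have "measure_pmf.expectation (Pi_pmf A dflt p) (\<lambda>y. h (y x))
      = measure_pmf.expectation (map_pmf (\<lambda>y. y x) (Pi_pmf A dflt p)) h"
    by simp
  also have "map_pmf (\<lambda>y. y x) (Pi_pmf A dflt p) = p x"
    using Pi_pmf_component[OF assms(1), of x dflt p] assms(2) by simp
  finally show ?thesis .
qed

lemma expectation_Pi_pmf_prod:
  fixes f :: "'a \<Rightarrow> 'b \<Rightarrow> real"
  assumes A: "finite A" and S: "S \<subseteq> A" and fin: "\<And>x. x \<in> A \<Longrightarrow> finite (set_pmf (p x))"
  shows "measure_pmf.expectation (Pi_pmf A dflt p) (\<lambda>y. \<Prod>x\<in>S. f x (y x))
       = (\<Prod>x\<in>S. measure_pmf.expectation (p x) (f x))"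
proof -
  have "prob_space.indep_vars (measure_pmf (Pi_pmf A dflt p)) (\<lambda>_. borel) (\<lambda>x y. f x (y x)) S"
    by (rule prob_space.indep_vars_compose2[OF measure_pmf.prob_space_axioms
          prob_space.indep_vars_subset[OF measure_pmf.prob_space_axioms indep_vars_Pi_pmf[OF A] S]])
      auto
  then have "measure_pmf.expectation (Pi_pmf A dflt p) (\<lambda>y. \<Prod>x\<in>S. f x (y x))
      = (\<Prod>x\<in>S. measure_pmf.expectation (Pi_pmf A dflt p) (\<lambda>y. f x (y x)))"
    using A S finite_set_Pi_pmf[OF A fin]
    by (intro prob_space.indep_vars_lebesgue_integral[OF measure_pmf.prob_space_axioms])
      (auto intro: finite_subset integrable_measure_pmf_finite)
  also have "\<dots> = (\<Prod>x\<in>S. measure_pmf.expectation (p x) (f x))"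
    using A S by (intro prod.cong refl expectation_Pi_pmf_component) auto
  finally show ?thesis .
qed

lemma expectation_Pi_pmf_centered_sum_sq:
  fixes a :: "'a \<Rightarrow> real" and g :: "'a \<Rightarrow> 'b \<Rightarrow> real"
  assumes A: "finite A" and fin: "\<And>x. x \<in> A \<Longrightarrow> finite (set_pmf (p x))"
    and centered: "\<And>x. x \<in> A \<Longrightarrow> measure_pmf.expectation (p x) (g x) = 0"
  shows "measure_pmf.expectation (Pi_pmf A dflt p) (\<lambda>y. ((\<Sum>x\<in>A. a x * g x (y x)) - \<beta>)\<^sup>2)
       = (\<Sum>x\<in>A. (a x)\<^sup>2 * measure_pmf.expectation (p x) (\<lambda>v. (g x v)\<^sup>2)) + \<beta>\<^sup>2"
proof -
  let ?E = "measure_pmf.expectation (Pi_pmf A dflt p)"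
  have int: "integrable (Pi_pmf A dflt p) h" for h :: "_ \<Rightarrow> real"
    by (rule integrable_measure_pmf_finite[OF finite_set_Pi_pmf[OF A fin]])
  have mean: "?E (\<lambda>y. g x (y x)) = 0" if "x \<in> A" for x
    using expectation_Pi_pmf_prod[OF A _ fin, where S = "{x}" and f = g and dflt = dflt] centered that
    by simp
  have cov: "?E (\<lambda>y. g x (y x) * g z (y z))
      = (if x = z then measure_pmf.expectation (p x) (\<lambda>v. (g x v)\<^sup>2) else 0)"
    if "x \<in> A" "z \<in> A" for x z
  proof (cases "x = z")
    case True
    then show ?thesis
      using expectation_Pi_pmf_prod[OF A _ fin, where S = "{x}" and f = "\<lambda>x v. (g x v)\<^sup>2"
          and dflt = dflt] that
      by (simp add: power2_eq_square)
  next
    case False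
    then show ?thesis
      using expectation_Pi_pmf_prod[OF A _ fin, where S = "{x, z}" and f = g and dflt = dflt]
        centered that
      by simp
  qed
  have square: "((\<Sum>x\<in>A. a x * g x (y x)) - \<beta>)\<^sup>2
      = (\<Sum>x\<in>A. \<Sum>z\<in>A. a x * a z * (g x (y x) * g z (y z)))
        - 2 * \<beta> * (\<Sum>x\<in>A. a x * g x (y x)) + \<beta>\<^sup>2" for y
  proof -
    have "(\<Sum>x\<in>A. a x * g x (y x))\<^sup>2 = (\<Sum>x\<in>A. \<Sum>z\<in>A. a x * a z * (g x (y x) * g z (y z)))"
      by (simp add: power2_eq_square sum_product mult_ac)
    then show ?thesis by (simp add: power2_diff)
  qed
  have "?E (\<lambda>y. \<Sum>x\<in>A. \<Sum>z\<in>A. a x * a z * (g x (y x) * g z (y z)))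
      = (\<Sum>x\<in>A. \<Sum>z\<in>A. a x * a z * ?E (\<lambda>y. g x (y x) * g z (y z)))"
    using int by (simp add: Bochner_Integration.integral_sum)
  also have "\<dots> = (\<Sum>x\<in>A. \<Sum>z\<in>A. if z = x
      then (a x)\<^sup>2 * measure_pmf.expectation (p x) (\<lambda>v. (g x v)\<^sup>2) else 0)"
    by (intro sum.cong refl) (auto simp: cov power2_eq_square)
  also have "\<dots> = (\<Sum>x\<in>A. (a x)\<^sup>2 * measure_pmf.expectation (p x) (\<lambda>v. (g x v)\<^sup>2))"
    using A by simp
  finally have "?E (\<lambda>y. \<Sum>x\<in>A. \<Sum>z\<in>A. a x * a z * (g x (y x) * g z (y z)))
      = (\<Sum>x\<in>A. (a x)\<^sup>2 * measure_pmf.expectation (p x) (\<lambda>v. (g x v)\<^sup>2))" .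
  moreover have "?E (\<lambda>y. \<Sum>x\<in>A. a x * g x (y x)) = 0"
    using int mean by (simp add: Bochner_Integration.integral_sum)
  ultimately show ?thesis
    unfolding square using int by simp
qed

lemma expectation_bernoulli_centered:
  assumes "0 \<le> q" and "q \<le> 1"
  shows "measure_pmf.expectation (bernoulli_pmf q) (\<lambda>v. of_bool v - q) = 0"
    and "measure_pmf.expectation (bernoulli_pmf q) (\<lambda>v. (of_bool v - q)\<^sup>2) = q * (1 - q)"
  using assms by (simp_all add: power2_eq_square algebra_simps)

lemma expectation_sqrt_le:
  fixes Z :: "'a \<Rightarrow> real"
  assumes fin: "finite (set_pmf M)" and nonneg: "\<And>x. 0 \<le> Z x"
  shows "measure_pmf.expectation M (\<lambda>x. sqrt (Z x)) \<le> sqrt (measure_pmf.expectation M Z)"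
proof (rule real_le_rsqrt)
  have "(measure_pmf.expectation M (\<lambda>x. sqrt (Z x)))\<^sup>2
      \<le> measure_pmf.expectation M (\<lambda>x. (sqrt (Z x))\<^sup>2)"
    by (rule measure_pmf.jensens_inequality[where I = UNIV])
       (auto intro: integrable_measure_pmf_finite[OF fin] convex_power2)
  then show "(measure_pmf.expectation M (\<lambda>x. sqrt (Z x)))\<^sup>2 \<le> measure_pmf.expectation M Z"
    using nonneg by simp
qed

lemma design_eq_gram_mat: "design d X M w = gram_mat d {..<M} w X"
  by (simp add: design_def gram_mat_def)

lemma gobj_ge:
  assumes "i < M"
  shows "X i \<bullet> (minv (design d X M w) *\<^sub>v X i) \<le> gobj d X M w"
  unfolding gobj_def using assms by (intro Max_ge) auto

lemma fstar_eq_gobj: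
  assumes "is_fstar_minimizer d X M k w"
  shows "fstar d X M k = gobj d X M w"
  unfolding fstar_def
  by (rule cInf_eq_minimum) (use assms in \<open>auto simp: is_fstar_minimizer_def\<close>)

lemma gobj_nonneg:
  assumes "0 < M" and X: "X ` {..<M} \<subseteq> carrier_vec d" and w: "\<And>i. i < M \<Longrightarrow> 0 \<le> w i"
    and inv: "invertible_mat (design d X M w)"
  shows "0 \<le> gobj d X M w"
proof -
  define y where "y = minv (design d X M w) *\<^sub>v X 0"
  have y: "y \<in> carrier_vec d" "design d X M w *\<^sub>v y = X 0"
    using mult_minv_mat_vec[of "design d X M w" d, OF _ inv] X \<open>0 < M\<close>
    by (auto simp: y_def design_eq_gram_mat)
  have "0 \<le> (\<Sum>i<M. w i * (X i \<bullet> y)\<^sup>2)"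
    using w by (intro sum_nonneg) auto
  also have "\<dots> = X 0 \<bullet> y"
    using scalar_prod_gram_mat[OF y(1) y(1) X, of w] y(2)
    by (simp add: design_eq_gram_mat power2_eq_square mult.assoc)
  also have "\<dots> \<le> gobj d X M w"
    unfolding y_def by (rule gobj_ge[OF \<open>0 < M\<close>])
  finally show ?thesis .
qed

section \<open>Ridge regression on a fixed design\<close>

lemma sum_comp_eq_sum_card_fibres:
  fixes F :: "'b \<Rightarrow> 'c :: comm_semiring_1"
  assumes "finite J" and "finite I" and "g ` J \<subseteq> I"
  shows "(\<Sum>j\<in>J. F (g j)) = (\<Sum>i\<in>I. of_nat (card {j \<in> J. g j = i}) * F i)"
proof -
  have "(\<Sum>j\<in>J. F (g j)) = (\<Sum>i\<in>I. \<Sum>j\<in>{j \<in> J. g j = i}. F (g j))"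
    using assms by (rule sum.group[symmetric])
  also have "\<dots> = (\<Sum>i\<in>I. of_nat (card {j \<in> J. g j = i}) * F i)"
    by (intro sum.cong refl) simp
  finally show ?thesis .
qed

locale fixed_design =
  fixes d M k T :: nat and lam :: real and X :: "nat \<Rightarrow> real Matrix.vec"
    and sched :: "nat \<Rightarrow> nat \<Rightarrow> nat"
  assumes lam_pos: "0 < lam"
    and arm_carrier: "X ` {..<M} \<subseteq> carrier_vec d"
    and sched_lt: "\<And>t r. t < T \<Longrightarrow> r < k \<Longrightarrow> sched t r < M"
begin

abbreviation slots :: "(nat \<times> nat) set" where
  "slots \<equiv> {..<T} \<times> {..<k}"

abbreviation played :: "nat \<times> nat \<Rightarrow> real Matrix.vec" where
  "played \<equiv> \<lambda>(t, r). X (sched t r)"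

abbreviation V :: "real mat" where
  "V \<equiv> Vmat d lam X sched T k"

lemma played_carrier: "played ` slots \<subseteq> carrier_vec d"
  using arm_carrier sched_lt by auto

lemma Vmat_eq_gram_mat: "V = lam \<cdot>\<^sub>m 1\<^sub>m d + gram_mat d slots (\<lambda>_. 1) played"
  unfolding Vmat_def gram_mat_def by (rule eq_matI) (auto simp: case_prod_unfold)

lemma Vmat_carrier: "V \<in> carrier_mat d d"
  by (simp add: Vmat_eq_gram_mat)

lemma scalar_prod_Vmat:
  assumes y: "y \<in> carrier_vec d" and z: "z \<in> carrier_vec d"
  shows "(V *\<^sub>v y) \<bullet> z = lam * (y \<bullet> z) + (\<Sum>j\<in>slots. (played j \<bullet> y) * (played j \<bullet> z))"
proof -
  let ?G = "gram_mat d slots (\<lambda>_. 1) played"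
  have "V *\<^sub>v y = lam \<cdot>\<^sub>v y + ?G *\<^sub>v y"
    unfolding Vmat_eq_gram_mat using y
    by (simp add: add_mult_distrib_mat_vec[of _ d d] smult_one_mult_mat_vec)
  then have "(V *\<^sub>v y) \<bullet> z = (lam \<cdot>\<^sub>v y) \<bullet> z + (?G *\<^sub>v y) \<bullet> z"
    by (metis add_scalar_prod_distrib gram_mat_carrier mult_mat_vec_carrier smult_carrier_vec y z)
  then show ?thesis
    using y z by (simp add: scalar_prod_gram_mat[OF y z played_carrier])
qed

lemma invertible_Vmat: "invertible_mat V"
proof (rule invertible_mat_if_pos_def[OF Vmat_carrier])
  fix v :: "real Matrix.vec" assume v: "v \<in> carrier_vec d" "v \<noteq> 0\<^sub>v d"
  have "0 < lam * (v \<bullet> v)"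
    using lam_pos scalar_prod_self_pos[OF v] by simp
  also have "\<dots> \<le> (V *\<^sub>v v) \<bullet> v"
    unfolding scalar_prod_Vmat[OF v(1) v(1)] by (auto intro: sum_nonneg)
  finally show "0 < (V *\<^sub>v v) \<bullet> v" .
qed

lemma ridge_error_eq:
  assumes x: "x \<in> carrier_vec d" and \<theta>: "\<theta> \<in> carrier_vec d"
  defines "u \<equiv> minv V *\<^sub>v x"
  shows "x \<bullet> (ridge d lam X sched T k rw - \<theta>)
    = (\<Sum>j\<in>slots. (played j \<bullet> u) * (of_bool (rw j) - played j \<bullet> \<theta>)) - lam * (u \<bullet> \<theta>)"
proof -
  have u: "u \<in> carrier_vec d" "V *\<^sub>v u = x"
    unfolding u_def using mult_minv_mat_vec[OF Vmat_carrier invertible_Vmat x] by auto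
  have x_eq: "x \<bullet> v = lam * (u \<bullet> v) + (\<Sum>j\<in>slots. (played j \<bullet> u) * (played j \<bullet> v))"
    if "v \<in> carrier_vec d" for v
    using scalar_prod_Vmat[OF u(1) that] u(2) by simp
  define b where "b = Matrix.vec d (\<lambda>a. \<Sum>j\<in>slots. of_bool (rw j) * played j $ a)"
  define \<theta>' where "\<theta>' = minv V *\<^sub>v b"
  have \<theta>': "\<theta>' \<in> carrier_vec d" "V *\<^sub>v \<theta>' = b"
    unfolding \<theta>'_def using mult_minv_mat_vec[OF Vmat_carrier invertible_Vmat]
    by (auto simp: b_def)
  have ridge_eq: "ridge d lam X sched T k rw = \<theta>'"
    unfolding ridge_def \<theta>'_def b_def by (simp add: case_prod_unfold)
  have "x \<bullet> \<theta>' = (V *\<^sub>v \<theta>') \<bullet> u"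
    using x_eq[OF \<theta>'(1)] scalar_prod_Vmat[OF \<theta>'(1) u(1)] comm_scalar_prod[OF u(1) \<theta>'(1)]
    by (simp add: mult.commute)
  also have "\<dots> = (\<Sum>j\<in>slots. of_bool (rw j) * (played j \<bullet> u))"
    unfolding \<theta>'(2) b_def by (rule scalar_prod_vec_sum[OF u(1) played_carrier])
  finally show ?thesis
    unfolding ridge_eq scalar_prod_minus_distrib[OF x \<theta>'(1) \<theta>] x_eq[OF \<theta>]
    by (simp add: algebra_simps sum_subtractf)
qed

lemma rewards_eq_Pi_pmf:
  "rewards X \<theta> sched T k = Pi_pmf slots False (\<lambda>j. bernoulli_pmf (played j \<bullet> \<theta>))"
  unfolding rewards_def by (simp add: case_prod_unfold)

lemma expected_sq_ridge_error_le:
  assumes x: "x \<in> carrier_vec d" and \<theta>: "\<theta> \<in> carrier_vec d"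
    and mean: "\<And>i. i < M \<Longrightarrow> 0 \<le> X i \<bullet> \<theta> \<and> X i \<bullet> \<theta> \<le> 1"
  shows "measure_pmf.expectation (rewards X \<theta> sched T k)
      (\<lambda>rw. (x \<bullet> (ridge d lam X sched T k rw - \<theta>))\<^sup>2)
    \<le> (1/4 + lam * (\<theta> \<bullet> \<theta>)) * (x \<bullet> (minv V *\<^sub>v x))"
proof -
  define u where "u = minv V *\<^sub>v x"
  define a where "a = (\<lambda>j. played j \<bullet> u)"
  define \<mu> where "\<mu> = (\<lambda>j. played j \<bullet> \<theta>)"
  have u: "u \<in> carrier_vec d" "V *\<^sub>v u = x"
    unfolding u_def using mult_minv_mat_vec[OF Vmat_carrier invertible_Vmat x] by auto
  have \<mu>: "0 \<le> \<mu> j" "\<mu> j \<le> 1" if "j \<in> slots" for j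
    using mean sched_lt that by (auto simp: \<mu>_def)
  have "measure_pmf.expectation (rewards X \<theta> sched T k)
      (\<lambda>rw. (x \<bullet> (ridge d lam X sched T k rw - \<theta>))\<^sup>2)
      = (\<Sum>j\<in>slots. (a j)\<^sup>2 * (\<mu> j * (1 - \<mu> j))) + (lam * (u \<bullet> \<theta>))\<^sup>2"
    unfolding ridge_error_eq[OF x \<theta>] rewards_eq_Pi_pmf
    using expectation_Pi_pmf_centered_sum_sq[of slots "\<lambda>j. bernoulli_pmf (\<mu> j)"
        "\<lambda>j v. of_bool v - \<mu> j"]
      expectation_bernoulli_centered[OF \<mu>]
    by (simp add: a_def \<mu>_def u_def)
  also have "\<dots> \<le> (\<Sum>j\<in>slots. (a j)\<^sup>2 * (1/4)) + lam\<^sup>2 * ((u \<bullet> u) * (\<theta> \<bullet> \<theta>))"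
  proof (intro add_mono sum_mono mult_left_mono)
    show "\<mu> j * (1 - \<mu> j) \<le> 1/4" for j
      using zero_le_power2[of "\<mu> j - 1/2"] by (simp add: power2_eq_square algebra_simps)
    show "(lam * (u \<bullet> \<theta>))\<^sup>2 \<le> lam\<^sup>2 * ((u \<bullet> u) * (\<theta> \<bullet> \<theta>))"
      unfolding power_mult_distrib
      by (intro mult_left_mono scalar_prod_Cauchy_Schwarz[OF u(1) \<theta>]) simp
  qed simp
  also have "\<dots> = (\<Sum>j\<in>slots. (a j)\<^sup>2) / 4 + lam\<^sup>2 * ((u \<bullet> u) * (\<theta> \<bullet> \<theta>))"
    by (simp add: sum_divide_distrib)
  also have "\<dots> \<le> (1/4 + lam * (\<theta> \<bullet> \<theta>)) * (lam * (u \<bullet> u) + (\<Sum>j\<in>slots. (a j)\<^sup>2))"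
  proof -
    have "0 \<le> lam * (u \<bullet> u) / 4 + lam * (\<theta> \<bullet> \<theta>) * (\<Sum>j\<in>slots. (a j)\<^sup>2)"
      using lam_pos scalar_prod_self_nonneg[of u] scalar_prod_self_nonneg[of \<theta>]
      by (intro add_nonneg_nonneg mult_nonneg_nonneg sum_nonneg) auto
    then show ?thesis by (simp add: algebra_simps power2_eq_square[of lam])
  qed
  also have "lam * (u \<bullet> u) + (\<Sum>j\<in>slots. (a j)\<^sup>2) = x \<bullet> u"
    using scalar_prod_Vmat[OF u(1) u(1)] u(2) by (simp add: a_def power2_eq_square)
  finally show ?thesis by (simp add: u_def)
qed

lemma gram_le_Vmat:
  assumes counts: "\<And>i. i < M \<Longrightarrow>
      real (card {(t, r). t < T \<and> r < k \<and> sched t r = i}) = real k * real T * w i"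
    and u: "u \<in> carrier_vec d"
  shows "real k * real T * ((design d X M w *\<^sub>v u) \<bullet> u) \<le> (V *\<^sub>v u) \<bullet> u"
proof -
  define F where "F i = (X i \<bullet> u) * (X i \<bullet> u)" for i
  have "(\<Sum>j\<in>slots. (played j \<bullet> u) * (played j \<bullet> u))
      = (\<Sum>j\<in>slots. F ((\<lambda>(t, r). sched t r) j))"
    by (intro sum.cong) (auto simp: F_def)
  also have "\<dots> = (\<Sum>i<M. real (card {j \<in> slots. (\<lambda>(t, r). sched t r) j = i}) * F i)"
    by (rule sum_comp_eq_sum_card_fibres) (use sched_lt in auto)
  also have "\<dots> = real k * real T * ((design d X M w *\<^sub>v u) \<bullet> u)"
  proof -
    have "{j \<in> slots. (\<lambda>(t, r). sched t r) j = i} = {(t, r). t < T \<and> r < k \<and> sched t r = i}"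
      for i
      by auto
    then show ?thesis
      using counts scalar_prod_gram_mat[OF u u arm_carrier, of w]
      by (simp add: design_eq_gram_mat F_def sum_distrib_left mult_ac)
  qed
  finally show ?thesis
    unfolding scalar_prod_Vmat[OF u u] using lam_pos scalar_prod_self_nonneg[of u] by simp
qed

theorem RMSE_le_sqrt_fstar:
  assumes \<theta>: "\<theta> \<in> carrier_vec d"
    and mean: "\<And>i. i < M \<Longrightarrow> 0 \<le> X i \<bullet> \<theta> \<and> X i \<bullet> \<theta> \<le> 1"
    and M: "0 < M" and k: "1 \<le> k" and T: "1 \<le> T"
    and w: "is_fstar_minimizer d X M k w"
    and counts: "\<And>i. i < M \<Longrightarrow>
      real (card {(t, r). t < T \<and> r < k \<and> sched t r = i}) = real k * real T * w i"
  shows "RMSE d lam X M \<theta> sched T k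
    \<le> sqrt ((1/4 + lam * (\<theta> \<bullet> \<theta>)) * (fstar d X M k / (real k * real T)))"
proof -
  define B where "B = (1/4 + lam * (\<theta> \<bullet> \<theta>)) * (fstar d X M k / (real k * real T))"
  define err where "err rw i = (X i \<bullet> (ridge d lam X sched T k rw - \<theta>))\<^sup>2" for rw i
  let ?E = "measure_pmf.expectation (rewards X \<theta> sched T k)"
  have W: "invertible_mat (design d X M w)" "\<And>i. i < M \<Longrightarrow> 0 \<le> w i"
    using w by (auto simp: is_fstar_minimizer_def capped_simplex_def)
  have kT: "0 < real k * real T" using k T by simp
  have arm_error: "?E (\<lambda>rw. err rw i) \<le> B" if i: "i < M" for i
  proof -
    have Xi: "X i \<in> carrier_vec d" using arm_carrier i by auto
    have "real k * real T * (X i \<bullet> (minv V *\<^sub>v X i))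
        \<le> X i \<bullet> (minv (design d X M w) *\<^sub>v X i)"
      unfolding design_eq_gram_mat
      using W kT arm_carrier gram_le_Vmat[OF counts] Xi
      by (intro minv_quad_form_antimono Vmat_carrier invertible_Vmat) (auto simp: design_eq_gram_mat)
    also have "\<dots> \<le> fstar d X M k"
      using gobj_ge[OF i] fstar_eq_gobj[OF w] by simp
    finally have "X i \<bullet> (minv V *\<^sub>v X i) \<le> fstar d X M k / (real k * real T)"
      using kT by (simp add: field_simps)
    moreover have "0 \<le> 1/4 + lam * (\<theta> \<bullet> \<theta>)"
      using lam_pos scalar_prod_self_nonneg[of \<theta>] by simp
    ultimately have "(1/4 + lam * (\<theta> \<bullet> \<theta>)) * (X i \<bullet> (minv V *\<^sub>v X i)) \<le> B"
      unfolding B_def by (rule mult_left_mono)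
    then show ?thesis
      unfolding err_def using expected_sq_ridge_error_le[OF Xi \<theta> mean] by linarith
  qed
  have fin: "finite (set_pmf (rewards X \<theta> sched T k))"
    unfolding rewards_def by (rule finite_set_Pi_pmf) auto
  have "?E (\<lambda>rw. 1 / real M * (\<Sum>i<M. err rw i))
      = 1 / real M * (\<Sum>i<M. ?E (\<lambda>rw. err rw i))"
    by (simp add: Bochner_Integration.integral_sum integrable_measure_pmf_finite[OF fin])
  also have "\<dots> \<le> 1 / real M * (\<Sum>i<M. B)"
    using arm_error by (intro mult_left_mono sum_mono) auto
  also have "\<dots> = B" using M by simp
  finally have "?E (\<lambda>rw. 1 / real M * (\<Sum>i<M. err rw i)) \<le> B" .
  then have "sqrt (?E (\<lambda>rw. 1 / real M * (\<Sum>i<M. err rw i))) \<le> sqrt B" by simp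
  moreover have "RMSE d lam X M \<theta> sched T k \<le> sqrt (?E (\<lambda>rw. 1 / real M * (\<Sum>i<M. err rw i)))"
    unfolding RMSE_def err_def
    by (rule expectation_sqrt_le[OF fin]) (simp add: sum_nonneg)
  ultimately show ?thesis unfolding B_def by linarith
qed

end

lemma RMSE_le_sqrt_fstar_of_norm_le:
  assumes lam: "0 < lam" and X: "\<forall>i<M. X i \<in> carrier_vec d"
    and \<theta>: "\<theta> \<in> carrier_vec d" and \<theta>_norm: "sqrt (\<theta> \<bullet> \<theta>) \<le> c'"
    and mean: "\<forall>i<M. 0 \<le> X i \<bullet> \<theta> \<and> X i \<bullet> \<theta> \<le> 1"
    and k: "1 \<le> k" "k \<le> M" and T: "1 \<le> T" and w: "is_fstar_minimizer d X M k w"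
    and sched: "\<forall>t<T. \<forall>r<k. sched t r < M"
    and counts:
      "\<forall>i<M. real (card {(t, r). t < T \<and> r < k \<and> sched t r = i}) = real k * real T * w i"
  shows "RMSE d lam X M \<theta> sched T k
    \<le> sqrt (1/4 + lam * c'\<^sup>2) * sqrt (fstar d X M k / (real k * real T))"
proof -
  interpret fixed_design d M k T lam X sched
    using lam X sched by unfold_locales auto
  have "\<theta> \<bullet> \<theta> \<le> c'\<^sup>2"
    using \<theta>_norm scalar_prod_self_nonneg[of \<theta>] real_sqrt_le_iff by fastforce
  moreover have "0 \<le> fstar d X M k"
    using fstar_eq_gobj[OF w] gobj_nonneg[of M X d w] k X w
    by (auto simp: is_fstar_minimizer_def capped_simplex_def)
  ultimately have le: "(1/4 + lam * (\<theta> \<bullet> \<theta>)) * (fstar d X M k / (real k * real T))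
      \<le> (1/4 + lam * c'\<^sup>2) * (fstar d X M k / (real k * real T))"
    using lam by (intro mult_right_mono) auto
  have "RMSE d lam X M \<theta> sched T k
      \<le> sqrt ((1/4 + lam * (\<theta> \<bullet> \<theta>)) * (fstar d X M k / (real k * real T)))"
    using \<theta> mean k T w counts by (intro RMSE_le_sqrt_fstar) auto
  also have "\<dots> \<le> sqrt ((1/4 + lam * c'\<^sup>2) * (fstar d X M k / (real k * real T)))"
    using le by (rule real_sqrt_le_mono)
  also have "\<dots> = sqrt (1/4 + lam * c'\<^sup>2) * sqrt (fstar d X M k / (real k * real T))"
    by (rule real_sqrt_mult)
  finally show ?thesis .
qed

theorem lemma1:
  fixes lam c c' :: real
  assumes "lam > 0"
  shows "\<exists>C :: real. \<exists>p :: nat. C > 0 \<and>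
    (\<forall>(d::nat) (M::nat) (X :: nat \<Rightarrow> real Matrix.vec) (\<theta> :: real Matrix.vec) (k::nat) (T::nat)
        (w :: nat \<Rightarrow> real) (sched :: nat \<Rightarrow> nat \<Rightarrow> nat).
      (\<forall>i<M. X i \<in> carrier_vec d) \<and> inj_on X {..<M} \<and> spans_Rd d X M \<and>
      (\<forall>i<M. sqrt (scalar_prod (X i) (X i)) \<le> c) \<and>
      \<theta> \<in> carrier_vec d \<and> sqrt (scalar_prod (\<theta>) (\<theta>)) \<le> c' \<and>
      (\<forall>i<M. 0 \<le> scalar_prod (X i) (\<theta>) \<and> scalar_prod (X i) (\<theta>) \<le> 1) \<and>
      1 \<le> k \<and> k \<le> M \<and> 1 \<le> T \<and>
      is_fstar_minimizer d X M k w \<and>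
      (\<forall>t<T. \<forall>r<k. sched t r < M) \<and> (\<forall>t<T. inj_on (sched t) {..<k}) \<and>
      (\<forall>i<M. real (card {(t,r). t < T \<and> r < k \<and> sched t r = i}) = real k * real T * w i)
      \<longrightarrow>
      RMSE d lam X M \<theta> sched T k
        \<le> C * (ln (real d + real k * real T + 2)) ^ p * sqrt (fstar d X M k / (real k * real T)))"
proof (intro exI[of _ "sqrt (1/4 + lam * c'\<^sup>2)"] exI[of _ 0] conjI allI impI)
  show "0 < sqrt (1/4 + lam * c'\<^sup>2)"
    using assms by (simp add: add_pos_nonneg)
  \<comment> \<open>No logarithmic factor is needed, and neither are the hypotheses on injectivity,
    spanning and the norm bound \<open>c\<close> on the arms.\<close>
qed (use assms in \<open>auto intro: RMSE_le_sqrt_fstar_of_norm_le\<close>)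

end
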